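(* Let $\Gamma$ be a connected finite simple graph on $N\ge3$ vertices with $\varepsilon>\frac12$. Then for every vertex $v$ there exists $w\in\mathcal N(v)$ with $\deg w\le3$.
   Context: For a finite simple graph $\Gamma=(V,E)$ without isolated vertices, $\deg v$ is the number of neighbours of $v$ and $\mathcal N(v)=\{w\in V: w\sim v\}$. The normalized Laplacian acts on functions $f:V\to\mathbb R$ by $\Delta f(v)=f(v)-\frac{1}{\deg v}\sum_{w\sim v}f(w)$; its eigenvalues are $0=\lambda_1\le\lambda_2\le\dots\le\lambda_N$, and $\varepsilon:=\min_i|1-\lambda_i|$. *)

theory Defs
  imports Complex_Main
begin

definition simple_graph :: "'a set \<Rightarrow> ('a \<Rightarrow> 'a \<Rightarrow> bool) \<Rightarrow> bool" where
  "simple_graph V E \<longleftrightarrow> finite V \<and> (\<forall>x y. E x y \<longrightarrow> x \<in> V \<and> y \<in> V)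
     \<and> (\<forall>x y. E x y \<longrightarrow> E y x) \<and> (\<forall>x. \<not> E x x)"

definition connected_graph :: "'a set \<Rightarrow> ('a \<Rightarrow> 'a \<Rightarrow> bool) \<Rightarrow> bool" where
  "connected_graph V E \<longleftrightarrow> (\<forall>x\<in>V. \<forall>y\<in>V. E\<^sup>*\<^sup>* x y)"

definition nbhd :: "'a set \<Rightarrow> ('a \<Rightarrow> 'a \<Rightarrow> bool) \<Rightarrow> 'a \<Rightarrow> 'a set" where
  "nbhd V E v = {w \<in> V. E w v}"

definition deg :: "'a set \<Rightarrow> ('a \<Rightarrow> 'a \<Rightarrow> bool) \<Rightarrow> 'a \<Rightarrow> nat" where
  "deg V E v = card (nbhd V E v)"

definition norm_laplacian :: "'a set \<Rightarrow> ('a \<Rightarrow> 'a \<Rightarrow> bool) \<Rightarrow> ('a \<Rightarrow> real) \<Rightarrow> 'a \<Rightarrow> real" where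
  "norm_laplacian V E f v = f v - (1 / real (deg V E v)) * (\<Sum>w\<in>nbhd V E v. f w)"

definition laplacian_eigenvalue :: "'a set \<Rightarrow> ('a \<Rightarrow> 'a \<Rightarrow> bool) \<Rightarrow> real \<Rightarrow> bool" where
  "laplacian_eigenvalue V E lam \<longleftrightarrow>
     (\<exists>f. (\<exists>v\<in>V. f v \<noteq> 0) \<and> (\<forall>v\<in>V. norm_laplacian V E f v = lam * f v))"

text \<open>\<epsilon> = min over the eigenvalues \<lambda> of |1 - \<lambda>|. The spectrum is finite and nonempty,
  so the infimum is the minimum.\<close>
definition spectral_eps :: "'a set \<Rightarrow> ('a \<Rightarrow> 'a \<Rightarrow> bool) \<Rightarrow> real" where
  "spectral_eps V E = Inf {\<bar>1 - lam\<bar> | lam. laplacian_eigenvalue V E lam}"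

end

theory Submission imports Defs "HOL-Analysis.Analysis" begin

text \<open>Write \<open>P = I - \<Delta>\<close> for the random walk operator, which is self-adjoint for the
  degree-weighted inner product. Minimising \<open>\<parallel>P f\<parallel>\<^sup>2 / \<parallel>f\<parallel>\<^sup>2\<close> over the (compact) unit sphere
  yields an eigenvector of \<open>P\<^sup>2\<close> with eigenvalue \<open>s\<^sup>2\<close>, and then \<open>1 - s\<close> or \<open>1 + s\<close> is an
  eigenvalue of \<open>\<Delta>\<close>, so \<open>\<epsilon> \<le> s\<close>. If every neighbour of \<open>v\<close> had degree at least 4, the indicator
  of \<open>v\<close> would be a test function with Rayleigh quotient at most \<open>1/4\<close>, giving \<open>\<epsilon> \<le> 1/2\<close>.\<close>

lemma nonneg_quadratic_imp_linear_coeff_zero: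
  fixes a b :: real
  assumes "\<And>t. 0 \<le> 2 * t * a + t\<^sup>2 * b"
  shows "a = 0"
proof (rule ccontr)
  assume a: "a \<noteq> 0"
  define c where "c = \<bar>b\<bar> + 1"
  have c: "c > 0" unfolding c_def by simp
  define t where "t = - a / (2 * c)"
  have eq: "4 * c\<^sup>2 * (2 * t * a + t\<^sup>2 * b) = a\<^sup>2 * b - 4 * a\<^sup>2 * c"
    using c by (simp add: t_def field_simps power2_eq_square)
  have "a\<^sup>2 * b \<le> a\<^sup>2 * c" unfolding c_def by (intro mult_left_mono) auto
  moreover have "a\<^sup>2 * c > 0" using a c by simp
  moreover have "4 * c\<^sup>2 * (2 * t * a + t\<^sup>2 * b) \<ge> 0" using assms c by simp
  ultimately show False using eq by linarith
qed

lemma connected_graph_deg_pos: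
  assumes "simple_graph V E" "connected_graph V E" "card V \<ge> 2" "u \<in> V"
  shows "deg V E u > 0"
proof -
  have "\<not> V \<subseteq> {u}"
    using assms(3) card_mono[of "{u}" V] by auto
  then obtain y where y: "y \<in> V" "y \<noteq> u" by blast
  then have "E\<^sup>*\<^sup>* u y" using assms(2,4) by (simp add: connected_graph_def)
  then obtain z where "E u z" using y(2) by (metis converse_rtranclpE)
  then have "z \<in> nbhd V E u" using assms(1) by (simp add: simple_graph_def nbhd_def)
  moreover have "finite (nbhd V E u)" using assms(1) by (simp add: simple_graph_def nbhd_def)
  ultimately show ?thesis unfolding deg_def by (auto simp: card_gt_0_iff)
qed

lemma spectral_eps_le:
  assumes "laplacian_eigenvalue V E lam"
  shows "spectral_eps V E \<le> \<bar>1 - lam\<bar>"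
  unfolding spectral_eps_def
  by (rule cInf_lower) (use assms in \<open>auto intro: bdd_belowI[of _ 0]\<close>)

locale nonisolated_graph =
  fixes V :: "'a set" and E :: "'a \<Rightarrow> 'a \<Rightarrow> bool"
  assumes simple: "simple_graph V E"
    and deg_pos: "\<And>u. u \<in> V \<Longrightarrow> deg V E u > 0"
begin

definition degr :: "'a \<Rightarrow> real" where
  "degr u = real (deg V E u)"

definition walk :: "('a \<Rightarrow> real) \<Rightarrow> 'a \<Rightarrow> real" where
  "walk f u = (\<Sum>w\<in>nbhd V E u. f w) / degr u"

definition dinner :: "('a \<Rightarrow> real) \<Rightarrow> ('a \<Rightarrow> real) \<Rightarrow> real" where
  "dinner f g = (\<Sum>u\<in>V. degr u * f u * g u)"

abbreviation dnorm2 :: "('a \<Rightarrow> real) \<Rightarrow> real" where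
  "dnorm2 f \<equiv> dinner f f"

lemma finite_V: "finite V"
  using simple by (simp add: simple_graph_def)

lemma E_sym: "E x y \<Longrightarrow> E y x"
  using simple by (simp add: simple_graph_def)

lemma degr_ge_1: "u \<in> V \<Longrightarrow> degr u \<ge> 1"
  using deg_pos[of u] by (simp add: degr_def)

lemma norm_laplacian_eq_walk: "norm_laplacian V E f v = f v - walk f v"
  unfolding norm_laplacian_def walk_def degr_def by simp

lemma walk_eq_sum_V: "walk f u = (\<Sum>w\<in>V. if E w u then f w else 0) / degr u"
proof -
  have "(\<Sum>w\<in>nbhd V E u. f w) = (\<Sum>w\<in>V. if E w u then f w else 0)"
    unfolding nbhd_def using finite_V by (simp add: sum.inter_filter)
  then show ?thesis by (simp add: walk_def)
qed

lemma walk_add_scaled: "walk (\<lambda>x. f x + t * g x) = (\<lambda>x. walk f x + t * walk g x)"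
  unfolding walk_def by (auto simp: sum.distrib sum_distrib_left add_divide_distrib)

lemma walk_scale: "walk (\<lambda>x. c * f x) = (\<lambda>x. c * walk f x)"
  unfolding walk_def by (auto simp: sum_distrib_left)

lemma dinner_commute: "dinner f g = dinner g f"
  unfolding dinner_def by (simp add: ac_simps)

lemma dinner_add_scaled_left: "dinner (\<lambda>x. f x + t * g x) h = dinner f h + t * dinner g h"
  unfolding dinner_def by (simp add: algebra_simps sum.distrib sum_distrib_left)

lemma dinner_scale_left: "dinner (\<lambda>x. c * f x) g = c * dinner f g"
  unfolding dinner_def by (simp add: sum_distrib_left algebra_simps)

lemma dnorm2_add_scaled:
  "dnorm2 (\<lambda>x. f x + t * g x) = dnorm2 f + 2 * t * dinner f g + t\<^sup>2 * dnorm2 g"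
  using dinner_add_scaled_left dinner_commute by (simp add: algebra_simps power2_eq_square)

lemma degr_square_nonneg: "u \<in> V \<Longrightarrow> degr u * f u * f u \<ge> 0"
  using degr_ge_1[of u] by (simp add: mult.assoc)

lemma dnorm2_nonneg: "dnorm2 f \<ge> 0"
  unfolding dinner_def using degr_square_nonneg by (intro sum_nonneg)

lemma dinner_indicator:
  "u \<in> V \<Longrightarrow> dinner f (\<lambda>x. if x = u then 1 else 0) = degr u * f u"
  unfolding dinner_def using finite_V by (simp add: if_distrib cong: if_cong)

lemma degr_walk_eq_sum:
  assumes "u \<in> V"
  shows "degr u * walk f u * g u = (\<Sum>w\<in>V. if E w u then f w * g u else 0)"
  using degr_ge_1[OF assms]
  by (simp add: walk_eq_sum_V sum_distrib_right) (intro sum.cong refl, simp)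

lemma walk_self_adjoint: "dinner (walk f) g = dinner f (walk g)"
proof -
  have "dinner (walk f) g = (\<Sum>u\<in>V. \<Sum>w\<in>V. if E w u then f w * g u else 0)"
    unfolding dinner_def using degr_walk_eq_sum by simp
  also have "\<dots> = (\<Sum>w\<in>V. \<Sum>u\<in>V. if E u w then g u * f w else 0)"
    using E_sym by (subst sum.swap) (intro sum.cong refl, auto simp: mult.commute)
  also have "\<dots> = dinner f (walk g)"
    unfolding dinner_def using degr_walk_eq_sum[of _ g f] by (simp add: ac_simps)
  finally show ?thesis .
qed

lemma dnorm2_continuous: "continuous_on UNIV dnorm2"
  unfolding dinner_def by (intro continuous_intros continuous_on_product_coordinates)

lemma walk_dnorm2_continuous: "continuous_on A (\<lambda>f. dnorm2 (walk f))"
  unfolding dinner_def walk_def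
  by (intro continuous_intros)
    (auto intro: continuous_on_subset[OF continuous_on_product_coordinates] dest: degr_ge_1)

lemma abs_le_1_if_dnorm2_eq_1:
  assumes "dnorm2 f = 1" "u \<in> V"
  shows "\<bar>f u\<bar> \<le> 1"
proof -
  have "degr u * f u * f u \<le> dnorm2 f"
    unfolding dinner_def using assms(2) finite_V degr_square_nonneg by (intro member_le_sum) auto
  moreover have "f u * f u \<le> degr u * f u * f u"
    using degr_ge_1[OF assms(2)] by (simp add: mult.assoc mult_le_cancel_right1)
  ultimately have "(f u)\<^sup>2 \<le> 1\<^sup>2" using assms(1) by (simp add: power2_eq_square)
  then show ?thesis using abs_le_square_iff[of "f u" 1] by simp
qed

lemma exists_walk_min_on_unit_sphere:
  assumes "V \<noteq> {}"
  shows "\<exists>g. (\<forall>x. x \<notin> V \<longrightarrow> g x = 0) \<and> dnorm2 g = 1 \<and>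
    (\<forall>f. (\<forall>x. x \<notin> V \<longrightarrow> f x = 0) \<longrightarrow> dnorm2 f = 1 \<longrightarrow> dnorm2 (walk g) \<le> dnorm2 (walk f))"
proof -
  define S where "S = Pi\<^sub>E UNIV (\<lambda>u. if u \<in> V then {-1..1::real} else {0}) \<inter> dnorm2 -` {1}"
  have "compactin (product_topology (\<lambda>_. euclidean) UNIV)
      (Pi\<^sub>E UNIV (\<lambda>u. if u \<in> V then {-1..1::real} else {0}))"
    by (subst compactin_PiE) auto
  moreover have "closed (dnorm2 -` {1})"
    using dnorm2_continuous by (simp add: continuous_on_closed_vimage)
  ultimately have "compact S"
    unfolding S_def euclidean_product_topology by (simp add: compact_Int_closed)
  have S_iff: "f \<in> S \<longleftrightarrow> (\<forall>x. x \<notin> V \<longrightarrow> f x = 0) \<and> dnorm2 f = 1" for f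
    unfolding S_def using abs_le_1_if_dnorm2_eq_1 by (auto simp: PiE_iff abs_le_iff)
  obtain v where v: "v \<in> V" using assms by blast
  define d where "d = (\<lambda>x. if x = v then 1 / sqrt (degr v) else (0::real))"
  have "dnorm2 d = degr v * (1 / sqrt (degr v)) * (1 / sqrt (degr v))"
    unfolding dinner_def d_def using v finite_V by (simp add: if_distrib cong: if_cong)
  also have "\<dots> = 1" using degr_ge_1[OF v] by (simp add: field_simps)
  finally have "S \<noteq> {}" using S_iff[of d] v by (auto simp: d_def)
  from continuous_attains_inf[OF \<open>compact S\<close> this walk_dnorm2_continuous]
  show ?thesis using S_iff by blast
qed

definition walk_rayleigh_minimizer :: "('a \<Rightarrow> real) \<Rightarrow> bool" where
  "walk_rayleigh_minimizer g \<longleftrightarrow> (\<forall>x. x \<notin> V \<longrightarrow> g x = 0) \<and> dnorm2 g = 1 \<and>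
    (\<forall>f. (\<forall>x. x \<notin> V \<longrightarrow> f x = 0) \<longrightarrow> dnorm2 (walk g) * dnorm2 f \<le> dnorm2 (walk f))"

lemma walk_rayleigh_minimizer_exists:
  assumes "V \<noteq> {}"
  shows "\<exists>g. walk_rayleigh_minimizer g"
proof -
  obtain g where g0: "\<forall>x. x \<notin> V \<longrightarrow> g x = 0" and g1: "dnorm2 g = 1"
    and gmin: "\<And>f. \<forall>x. x \<notin> V \<longrightarrow> f x = 0 \<Longrightarrow> dnorm2 f = 1 \<Longrightarrow> dnorm2 (walk g) \<le> dnorm2 (walk f)"
    using exists_walk_min_on_unit_sphere[OF assms] by blast
  have "dnorm2 (walk g) * dnorm2 f \<le> dnorm2 (walk f)" if f0: "\<forall>x. x \<notin> V \<longrightarrow> f x = 0" for f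
  proof (cases "dnorm2 f = 0")
    case True
    then show ?thesis using dnorm2_nonneg by simp
  next
    case False
    then have pos: "dnorm2 f > 0" using dnorm2_nonneg[of f] by simp
    define c where "c = 1 / sqrt (dnorm2 f)"
    have c2: "c * c = 1 / dnorm2 f" using pos by (simp add: c_def)
    have "dnorm2 (\<lambda>x. c * f x) = c * c * dnorm2 f"
      by (simp add: dinner_scale_left dinner_commute[of f "\<lambda>x. c * f x"])
    then have "dnorm2 (walk g) \<le> dnorm2 (walk (\<lambda>x. c * f x))"
      using f0 c2 pos by (intro gmin) auto
    also have "\<dots> = c * c * dnorm2 (walk f)"
      by (simp add: walk_scale dinner_scale_left dinner_commute[of "walk f" "\<lambda>x. c * walk f x"])
    finally show ?thesis using pos c2 by (simp add: field_simps)
  qed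
  then show ?thesis using g0 g1 by (auto simp: walk_rayleigh_minimizer_def)
qed

lemma walk_rayleigh_minimizer_le:
  assumes "walk_rayleigh_minimizer g" "\<forall>x. x \<notin> V \<longrightarrow> f x = 0"
  shows "dnorm2 (walk g) * dnorm2 f \<le> dnorm2 (walk f)"
  using assms by (simp add: walk_rayleigh_minimizer_def)

lemma walk_rayleigh_minimizer_nonzero:
  assumes "walk_rayleigh_minimizer g"
  shows "\<exists>u\<in>V. g u \<noteq> 0"
proof (rule ccontr)
  assume "\<not> ?thesis"
  then have "dnorm2 g = 0" by (simp add: dinner_def)
  then show False using assms by (simp add: walk_rayleigh_minimizer_def)
qed

text \<open>First variation of the Rayleigh quotient in the direction of an indicator function.\<close>
lemma walk_rayleigh_minimizer_eigen:
  assumes g: "walk_rayleigh_minimizer g" and u: "u \<in> V"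
  shows "walk (walk g) u = dnorm2 (walk g) * g u"
proof -
  define h where "h = (\<lambda>x. if x = u then 1 else (0::real))"
  define m where "m = dnorm2 (walk g)"
  define A where "A = dinner (walk g) (walk h)"
  define B where "B = dinner g h"
  have "0 \<le> 2 * t * (A - m * B) + t\<^sup>2 * (dnorm2 (walk h) - m * dnorm2 h)" for t
  proof -
    have "m * dnorm2 (\<lambda>x. g x + t * h x) \<le> dnorm2 (walk (\<lambda>x. g x + t * h x))"
      unfolding m_def using g u
      by (intro walk_rayleigh_minimizer_le) (auto simp: walk_rayleigh_minimizer_def h_def)
    moreover have "dnorm2 g = 1" using g by (simp add: walk_rayleigh_minimizer_def)
    ultimately show ?thesis
      by (simp add: walk_add_scaled dnorm2_add_scaled A_def B_def m_def algebra_simps)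
  qed
  then have "A - m * B = 0" by (rule nonneg_quadratic_imp_linear_coeff_zero)
  moreover have "A = degr u * walk (walk g) u"
    unfolding A_def walk_self_adjoint[symmetric] h_def using u by (simp add: dinner_indicator)
  moreover have "B = degr u * g u" unfolding B_def h_def using u by (simp add: dinner_indicator)
  ultimately show ?thesis using degr_ge_1[OF u] by (simp add: m_def)
qed

text \<open>If \<open>P\<^sup>2 g = s\<^sup>2 g\<close>, then \<open>P g + s g\<close> is an eigenvector of \<open>P\<close> for \<open>s\<close> unless it vanishes, in which
  case \<open>g\<close> is one for \<open>-s\<close>.\<close>
lemma laplacian_eigenvalue_of_walk_square:
  assumes g: "\<exists>u\<in>V. g u \<noteq> 0" and s: "s \<ge> 0"
    and eig: "\<And>u. u \<in> V \<Longrightarrow> walk (walk g) u = s\<^sup>2 * g u"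
  shows "\<exists>lam. laplacian_eigenvalue V E lam \<and> \<bar>1 - lam\<bar> = s"
proof -
  define h where "h = (\<lambda>x. walk g x + s * g x)"
  show ?thesis
  proof (cases "\<exists>u\<in>V. h u \<noteq> 0")
    case True
    have "norm_laplacian V E h x = (1 - s) * h x" if "x \<in> V" for x
      using eig[OF that] unfolding norm_laplacian_eq_walk h_def walk_add_scaled
      by (simp add: algebra_simps power2_eq_square)
    then have "laplacian_eigenvalue V E (1 - s)"
      using True by (auto simp: laplacian_eigenvalue_def)
    then show ?thesis using s by auto
  next
    case False
    have "norm_laplacian V E g x = (1 + s) * g x" if "x \<in> V" for x
      using False that by (auto simp: norm_laplacian_eq_walk h_def algebra_simps)
    then have "laplacian_eigenvalue V E (1 + s)"
      using g by (auto simp: laplacian_eigenvalue_def)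
    then show ?thesis using s by auto
  qed
qed

lemma dnorm2_walk_indicator_le:
  assumes v: "v \<in> V" and nb: "\<forall>w\<in>nbhd V E v. deg V E w \<ge> 4"
  shows "dnorm2 (walk (\<lambda>x. if x = v then 1 else 0)) \<le> degr v / 4"
proof -
  let ?d = "\<lambda>x. if x = v then 1 else (0::real)"
  have walk_d: "walk ?d u = (if E v u then 1 / degr u else 0)" for u
  proof -
    have "(\<Sum>w\<in>V. if E w u then ?d w else 0) = (\<Sum>w\<in>V. if w = v then (if E v u then 1 else 0) else 0)"
      by (rule sum.cong) auto
    also have "\<dots> = (if E v u then 1 else 0)" using v finite_V by simp
    finally show ?thesis unfolding walk_eq_sum_V by simp
  qed
  have "dnorm2 (walk ?d) = (\<Sum>u\<in>V. if E v u then 1 / degr u else 0)"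
    unfolding dinner_def walk_d using degr_ge_1 by (intro sum.cong refl) (simp add: field_simps)
  also have "\<dots> \<le> (\<Sum>u\<in>V. if E v u then 1 / 4 else 0)"
  proof (intro sum_mono)
    fix u assume "u \<in> V"
    then have "E v u \<Longrightarrow> degr u \<ge> 4" using nb E_sym by (simp add: nbhd_def degr_def)
    then show "(if E v u then 1 / degr u else 0) \<le> (if E v u then 1 / 4 else 0)"
      by (cases "E v u") (simp_all add: divide_le_eq_1)
  qed
  also have "\<dots> = real (card {u \<in> V. E v u}) / 4"
    using finite_V by (simp add: sum.If_cases Int_def)
  also have "{u \<in> V. E v u} = nbhd V E v" using E_sym by (auto simp: nbhd_def)
  finally show ?thesis by (simp add: degr_def deg_def)
qed

lemma laplacian_eigenvalue_near_one:
  assumes v: "v \<in> V" and nb: "\<forall>w\<in>nbhd V E v. deg V E w \<ge> 4"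
  shows "\<exists>lam. laplacian_eigenvalue V E lam \<and> \<bar>1 - lam\<bar> \<le> 1 / 2"
proof -
  obtain g where g: "walk_rayleigh_minimizer g"
    using walk_rayleigh_minimizer_exists v by blast
  define m where "m = dnorm2 (walk g)"
  let ?d = "\<lambda>x. if x = v then 1 else (0::real)"
  have "m * dnorm2 ?d \<le> dnorm2 (walk ?d)"
    unfolding m_def using g by (rule walk_rayleigh_minimizer_le) (simp add: v)
  then have "m * degr v \<le> degr v / 4"
    using dnorm2_walk_indicator_le[OF v nb] dinner_indicator[OF v, of ?d] by simp
  then have "m \<le> 1 / 4" using degr_ge_1[OF v] by (simp add: field_simps)
  then have s: "sqrt m \<le> 1 / 2" using real_sqrt_le_mono[of m "1 / 4"] by (simp add: real_sqrt_divide)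
  have m0: "m \<ge> 0" unfolding m_def by (rule dnorm2_nonneg)
  then have "walk (walk g) u = (sqrt m)\<^sup>2 * g u" if "u \<in> V" for u
    using walk_rayleigh_minimizer_eigen[OF g that] by (simp add: m_def)
  then obtain lam where "laplacian_eigenvalue V E lam" "\<bar>1 - lam\<bar> = sqrt m"
    using laplacian_eigenvalue_of_walk_square[OF walk_rayleigh_minimizer_nonzero[OF g], of "sqrt m"] m0
    by auto
  then show ?thesis using s by auto
qed

end

theorem mainTheorem15:
  fixes V :: "'a set" and E :: "'a \<Rightarrow> 'a \<Rightarrow> bool"
  assumes "simple_graph V E"
    and "connected_graph V E"
    and "card V \<ge> 3"
    and "spectral_eps V E > 1 / 2"
  shows "\<forall>v\<in>V. \<exists>w\<in>nbhd V E v. deg V E w \<le> 3"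
proof (rule ccontr)
  assume "\<not> ?thesis"
  then obtain v where v: "v \<in> V" and nb: "\<forall>w\<in>nbhd V E v. \<not> deg V E w \<le> 3"
    by auto
  then have nb: "\<forall>w\<in>nbhd V E v. deg V E w \<ge> 4" by auto
  interpret nonisolated_graph V E
    using assms(1-3) by unfold_locales (auto intro: connected_graph_deg_pos)
  obtain lam where "laplacian_eigenvalue V E lam" "\<bar>1 - lam\<bar> \<le> 1 / 2"
    using laplacian_eigenvalue_near_one[OF v nb] by blast
  then show False using spectral_eps_le[of V E lam] assms(4) by simp
qed

end
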